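(* For every $n\ge 1$, the map $\nu:S_n\to\mathcal{D}_n\times\mathcal{D}_n$, $\nu(\sigma)=(\lambda(\sigma),\mu(\sigma))$, is injective when restricted to the set $S_n(1234)$ of permutations of $[n]$ avoiding the pattern $1234$.
   Context: A permutation $\sigma\in S_n$ avoids $1234$ if it has no subsequence $\sigma(i_1)<\sigma(i_2)<\sigma(i_3)<\sigma(i_4)$ with $i_1<i_2<i_3<i_4$. $\mathcal{D}_n$ denotes the set of Dyck paths of semilength $n$ (lattice paths from $(0,0)$ to $(2n,0)$ with steps $U=(1,1)$, $D=(1,-1)$, never going below the $x$-axis). For $\sigma=x_1x_2\cdots x_n$: $x_i$ is a left-to-right (LTR) minimum if $x_i<x_j$ for all $j<i$; $x_i$ is a right-to-left (RTL) maximum if $x_i>x_j$ for all $j>i$. The map $\lambda$: write $\sigma=m_1w_1m_2w_2\cdots m_kw_k$ where $m_1>m_2>\dots>m_k=1$ are the LTR minima of $\sigma$ and $w_i$ are (possibly empty) words, $l_i=|w_i|$; set $m_0=n+1$; then $\lambda(\sigma)=U^{m_0-m_1}D^{l_1+1}U^{m_1-m_2}D^{l_2+1}\cdots U^{m_{k-1}-m_k}D^{l_k+1}$. The map $\mu$: write $\sigma=u_hM_hu_{h-1}M_{h-1}\cdots u_1M_1$ where $M_1<M_2<\dots<M_h=n$ are the RTL maxima of $\sigma$ and $u_i$ are (possibly empty) words; set $M_0=0$; then $\mu(\sigma)=U^{M_1-M_0}D^{|u_1|+1}U^{M_2-M_1}D^{|u_2|+1}\cdots U^{M_h-M_{h-1}}D^{|u_h|+1}$.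 (Equivalently, the ascent code of $\mu(\sigma)$ is $M_1,\dots,M_{h-1}$ and its descent code is $n-P_2,\dots,n-P_h$, where $P_i$ is the position of $M_i$.) *)

theory Defs
  imports "HOL-Combinatorics.Combinatorics"
begin

datatype step = U | D

definition avoids1234 :: "nat list \<Rightarrow> bool" where
  "avoids1234 xs \<longleftrightarrow> \<not> (\<exists>i1 i2 i3 i4. i1 < i2 \<and> i2 < i3 \<and> i3 < i4 \<and> i4 < length xs \<and>
      xs ! i1 < xs ! i2 \<and> xs ! i2 < xs ! i3 \<and> xs ! i3 < xs ! i4)"

definition Av1234 :: "nat \<Rightarrow> nat list set" where
  "Av1234 n = {xs \<in> permutations_of_set {1..n}. avoids1234 xs}"

text \<open>Dyck paths of semilength n (U = (1,1), D = (1,-1)).\<close>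
definition height :: "step list \<Rightarrow> int" where
  "height w = int (length (filter (\<lambda>s. s = U) w)) - int (length (filter (\<lambda>s. s = D) w))"

definition dyck :: "nat \<Rightarrow> step list set" where
  "dyck n = {w. length w = 2 * n \<and> height w = 0 \<and> (\<forall>k \<le> length w. height (take k w) \<ge> 0)}"

text \<open>Started with c = n+1 this yields exactly
  U^(m0-m1) D^(l1+1) ... U^(m(k-1)-mk) D^(lk+1).\<close>
fun lam_aux :: "nat \<Rightarrow> nat list \<Rightarrow> step list" where
  "lam_aux c [] = []"
| "lam_aux c (x # xs) =
     (if x < c then replicate (c - x) U @ D # lam_aux x xs else D # lam_aux c xs)"

definition lam :: "nat \<Rightarrow> nat list \<Rightarrow> step list" where
  "lam n \<sigma> = lam_aux (n + 1) \<sigma>"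

text \<open>Scan of the reversed word with current right-to-left maximum c (start M0 = 0):
  rev \<sigma> = M1 rev(u1) M2 rev(u2) ... Mh rev(uh), giving
  U^(M1-M0) D^(|u1|+1) ... U^(Mh-M(h-1)) D^(|uh|+1).\<close>
fun mu_aux :: "nat \<Rightarrow> nat list \<Rightarrow> step list" where
  "mu_aux c [] = []"
| "mu_aux c (x # xs) =
     (if c < x then replicate (x - c) U @ D # mu_aux x xs else D # mu_aux c xs)"

definition mu :: "nat list \<Rightarrow> step list" where
  "mu \<sigma> = mu_aux 0 (rev \<sigma>)"

definition nu :: "nat \<Rightarrow> nat list \<Rightarrow> step list \<times> step list" where
  "nu n \<sigma> = (lam n \<sigma>, mu \<sigma>)"

end

theory Submission
  imports Defs
begin

text \<open>The scan of \<open>\<lambda>\<close> records every left-to-right minimum together with its position and value,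
  and \<open>\<mu>\<close> is the \<open>\<lambda>\<close>-scan of the reverse-complement, so \<open>\<nu>(\<sigma>)\<close> determines the positions and values
  of all left-to-right minima and right-to-left maxima of \<open>\<sigma>\<close>.  In a 1234-avoiding permutation
  the remaining entries form a decreasing sequence: an ascent \<open>\<sigma>(p) < \<sigma>(q)\<close> between two of them,
  preceded by a smaller entry (\<open>\<sigma>(p)\<close> is no LTR minimum) and followed by a larger one
  (\<open>\<sigma>(q)\<close> is no RTL maximum), would be a 1234 pattern.  Hence these entries are the remaining
  values in decreasing order, and \<open>\<sigma>\<close> is determined by \<open>\<nu>(\<sigma>)\<close>.\<close>

definition ltr_min :: "nat list \<Rightarrow> nat \<Rightarrow> bool" where
  "ltr_min xs i \<longleftrightarrow> (\<forall>j<i. xs ! i < xs ! j)"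

definition rtl_max :: "nat list \<Rightarrow> nat \<Rightarrow> bool" where
  "rtl_max xs i \<longleftrightarrow> (\<forall>j. i < j \<and> j < length xs \<longrightarrow> xs ! j < xs ! i)"

definition reverse_complement :: "nat \<Rightarrow> nat list \<Rightarrow> nat list" where
  "reverse_complement N xs = map (\<lambda>x. N - x) (rev xs)"

lemma ltr_min_Cons_Suc: "ltr_min (x # xs) (Suc i) \<longleftrightarrow> xs ! i < x \<and> ltr_min xs i"
  by (auto simp: ltr_min_def All_less_Suc2)

lemma avoids1234_unmarked_decreasing:
  assumes "distinct xs" "avoids1234 xs" "p < q" "q < length xs"
    and "\<not> ltr_min xs p" "\<not> rtl_max xs q"
  shows "xs ! q < xs ! p"
proof (rule ccontr)
  have neq: "xs ! i \<noteq> xs ! j" if "i < j" "j < length xs" for i j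
    using assms(1) that by (simp add: nth_eq_iff_index_eq)
  assume "\<not> xs ! q < xs ! p"
  with neq[of p q] assms(3,4) have pq: "xs ! p < xs ! q" by simp
  obtain j where j: "j < p" "\<not> xs ! p < xs ! j"
    using assms(5) by (auto simp: ltr_min_def)
  with neq[of j p] assms(3,4) have jp: "xs ! j < xs ! p" by simp
  obtain k where k: "q < k" "k < length xs" "\<not> xs ! k < xs ! q"
    using assms(6) by (auto simp: rtl_max_def)
  with neq[of q k] have qk: "xs ! q < xs ! k" by simp
  show False
    using assms(2,3) j(1) k(1,2) jp pq qk unfolding avoids1234_def by blast
qed

text \<open>At the first position \<open>p\<close> where \<open>s\<close> and \<open>t\<close> differ, a larger value \<open>s ! p\<close> occurs in \<open>t\<close>
  at some later position; both positions are unmarked in \<open>t\<close>, yet form an ascent.\<close>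

lemma avoids1234_first_difference:
  assumes s: "distinct s" "set s = set t"
    and t: "distinct t" "avoids1234 t"
    and agree: "\<And>q. q < length t \<Longrightarrow> ltr_min t q \<or> rtl_max t q \<Longrightarrow> s ! q = t ! q"
    and p: "p < length t" "\<forall>q<p. s ! q = t ! q"
  shows "\<not> t ! p < s ! p"
proof
  assume lt: "t ! p < s ! p"
  have len: "length s = length t"
    using s(2) distinct_card[OF s(1)] distinct_card[OF t(1)] by simp
  have neq: "s ! i \<noteq> s ! j" if "i < j" "j < length t" for i j
    using s(1) that len by (simp add: nth_eq_iff_index_eq)
  have "s ! p \<in> set t"
    using s(2) p(1) len by (metis nth_mem)
  then obtain q where q: "q < length t" "t ! q = s ! p"
    by (auto simp: in_set_conv_nth)
  have "\<not> q < p"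
    using neq[of q p] p q by auto
  moreover have "q \<noteq> p"
    using q lt by auto
  ultimately have pq: "p < q" by simp
  have "\<not> (ltr_min t p \<or> rtl_max t p)"
    using agree[of p] p(1) lt by auto
  moreover have "\<not> (ltr_min t q \<or> rtl_max t q)"
    using agree[of q] neq[of p q] pq q by auto
  ultimately have "t ! q < t ! p"
    using avoids1234_unmarked_decreasing[OF t pq q(1)] by blast
  with q lt show False by simp
qed

lemma avoids1234_eq_if_agree_on_extrema:
  assumes "distinct s" "distinct t" "set s = set t" "avoids1234 s" "avoids1234 t"
    and st: "\<And>p. p < length s \<Longrightarrow> ltr_min s p \<or> rtl_max s p \<Longrightarrow> t ! p = s ! p"
    and ts: "\<And>p. p < length t \<Longrightarrow> ltr_min t p \<or> rtl_max t p \<Longrightarrow> s ! p = t ! p"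
  shows "s = t"
proof (rule ccontr)
  assume "s \<noteq> t"
  have len: "length s = length t"
    using assms(3) distinct_card[OF assms(1)] distinct_card[OF assms(2)] by simp
  with \<open>s \<noteq> t\<close> have differ: "\<exists>p. p < length t \<and> s ! p \<noteq> t ! p"
    by (metis nth_equalityI)
  obtain p where p: "p < length t" "s ! p \<noteq> t ! p"
    and "\<forall>q<p. \<not> (q < length t \<and> s ! q \<noteq> t ! q)"
    using exists_least_iff[THEN iffD1, OF differ] by blast
  then have first: "\<forall>q<p. s ! q = t ! q" "\<forall>q<p. t ! q = s ! q"
    by auto
  have "\<not> t ! p < s ! p"
    using avoids1234_first_difference[OF assms(1,3,2,5) ts p(1) first(1)] .
  moreover have "\<not> s ! p < t ! p"
    using avoids1234_first_difference[OF assms(2) assms(3)[symmetric] assms(1,4) st _ first(2)]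
      p(1) len by simp
  ultimately show False
    using p(2) by simp
qed

lemma replicate_append_Cons_eq_iff:
  "a \<noteq> b \<Longrightarrow> replicate m a @ b # xs = replicate k a @ b # ys \<longleftrightarrow> m = k \<and> xs = ys"
proof (induction m arbitrary: k)
  case 0 then show ?case by (cases k) auto
next
  case (Suc m) then show ?case by (cases k) auto
qed

lemma lam_aux_Cons_eq:
  assumes "lam_aux c (x # xs) = lam_aux c (y # ys)"
  shows "min c x = min c y \<and> lam_aux (min c x) xs = lam_aux (min c x) ys"
proof (cases "x < c"; cases "y < c")
  assume "x < c" "y < c"
  with assms have "c - x = c - y" "lam_aux x xs = lam_aux y ys"
    by (simp_all add: replicate_append_Cons_eq_iff)
  moreover from \<open>c - x = c - y\<close> \<open>x < c\<close> \<open>y < c\<close> have "x = y"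
    by arith
  ultimately show ?thesis
    using \<open>x < c\<close> by simp
next
  assume "x < c" "\<not> y < c"
  with assms show ?thesis by (cases "c - x") auto
next
  assume "\<not> x < c" "y < c"
  with assms show ?thesis by (cases "c - y") auto
next
  assume "\<not> x < c" "\<not> y < c"
  with assms show ?thesis by simp
qed

lemma lam_aux_eq_imp_ltr_min_eq:
  assumes "lam_aux c xs = lam_aux c ys" "i < length xs" "i < length ys"
    and "xs ! i < c" "ltr_min xs i"
  shows "ys ! i = xs ! i"
  using assms
proof (induction xs arbitrary: c ys i)
  case Nil then show ?case by simp
next
  case (Cons x xs)
  then obtain y ys' where ys: "ys = y # ys'"
    by (cases ys) auto
  have eq: "min c x = min c y" and tails: "lam_aux (min c x) xs = lam_aux (min c x) ys'"
    using lam_aux_Cons_eq Cons.prems(1) ys by blast+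
  show ?case
  proof (cases i)
    case 0
    then show ?thesis
      using Cons.prems(4) eq ys by (simp add: min_def split: if_splits)
  next
    case (Suc k)
    then show ?thesis
      using Cons.IH[OF tails, of k] Cons.prems ys by (simp add: ltr_min_Cons_Suc)
  qed
qed

lemma mu_aux_eq_lam_aux_complement:
  "c \<le> N \<Longrightarrow> set xs \<subseteq> {..N} \<Longrightarrow> mu_aux c xs = lam_aux (N - c) (map (\<lambda>x. N - x) xs)"
  by (induction xs arbitrary: c) (auto simp: diff_less_mono2)

lemma mu_eq_lam_reverse_complement:
  assumes "set xs \<subseteq> {..n}"
  shows "mu xs = lam n (reverse_complement (n + 1) xs)"
proof -
  have "set (rev xs) \<subseteq> {..n + 1}"
    using assms by auto
  then show ?thesis
    using mu_aux_eq_lam_aux_complement[of 0 "n + 1" "rev xs"]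
    by (simp add: mu_def lam_def reverse_complement_def)
qed

lemma nth_reverse_complement:
  "p < length xs \<Longrightarrow> reverse_complement N xs ! (length xs - Suc p) = N - xs ! p"
  by (simp add: reverse_complement_def rev_nth Suc_diff_Suc)

lemma rtl_max_imp_ltr_min_reverse_complement:
  assumes "rtl_max xs p" "p < length xs" "xs ! p \<le> N"
  shows "ltr_min (reverse_complement N xs) (length xs - Suc p)"
  unfolding ltr_min_def
proof (intro allI impI)
  fix j assume j: "j < length xs - Suc p"
  define k where "k = length xs - Suc j"
  have k: "p < k" "k < length xs" "j = length xs - Suc k"
    using j unfolding k_def by auto
  then have "xs ! k < xs ! p"
    using assms(1) by (simp add: rtl_max_def)
  then show "reverse_complement N xs ! (length xs - Suc p) < reverse_complement N xs ! j"
    using k assms(2,3) by (simp add: nth_reverse_complement)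
qed

lemma lam_eq_imp_ltr_min_eq:
  assumes "lam n xs = lam n ys" "set xs \<subseteq> {..n}" "length xs = length ys"
    and "i < length xs" "ltr_min xs i"
  shows "ys ! i = xs ! i"
proof (rule lam_aux_eq_imp_ltr_min_eq)
  show "lam_aux (n + 1) xs = lam_aux (n + 1) ys"
    using assms(1) by (simp add: lam_def)
  have "xs ! i \<in> set xs"
    using assms(4) by (rule nth_mem)
  then show "xs ! i < n + 1"
    using assms(2) by auto
qed (use assms(3-5) in simp_all)

lemma mu_eq_imp_rtl_max_eq:
  assumes "mu xs = mu ys" "set xs \<subseteq> {1..n}" "set ys \<subseteq> {1..n}" "length xs = length ys"
    and "p < length xs" "rtl_max xs p"
  shows "ys ! p = xs ! p"
proof -
  let ?i = "length xs - Suc p"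
  let ?xs' = "reverse_complement (n + 1) xs" and ?ys' = "reverse_complement (n + 1) ys"
  have "xs ! p \<in> set xs" "ys ! p \<in> set ys"
    using assms(4,5) by simp_all
  then have vals: "xs ! p \<in> {1..n}" "ys ! p \<in> {1..n}"
    using assms(2,3) by blast+
  have "set xs \<subseteq> {..n}" "set ys \<subseteq> {..n}"
    using assms(2,3) by auto
  then have "lam n ?xs' = lam n ?ys'"
    using assms(1) mu_eq_lam_reverse_complement by metis
  moreover have "set ?xs' \<subseteq> {..n}" "length ?xs' = length ?ys'"
    using assms(2,4) by (force simp: reverse_complement_def)+
  moreover have "?i < length ?xs'"
    using assms(5) by (simp add: reverse_complement_def)
  moreover have "ltr_min ?xs' ?i"
    using assms(5,6) vals by (intro rtl_max_imp_ltr_min_reverse_complement) auto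
  ultimately have "?ys' ! ?i = ?xs' ! ?i"
    by (rule lam_eq_imp_ltr_min_eq)
  then have "n + 1 - ys ! p = n + 1 - xs ! p"
    using nth_reverse_complement[of p xs] nth_reverse_complement[of p ys] assms(4,5) by simp
  with vals show ?thesis
    by auto
qed

lemma nu_eq_imp_agree_on_extrema:
  assumes s: "s \<in> Av1234 n" and t: "t \<in> Av1234 n" and eq: "nu n s = nu n t"
    and p: "p < length s" "ltr_min s p \<or> rtl_max s p"
  shows "t ! p = s ! p"
proof -
  have sets: "set s = {1..n}" "set t = {1..n}"
    using s t by (simp_all add: Av1234_def permutations_of_set_def)
  moreover have "distinct s" "distinct t"
    using s t by (simp_all add: Av1234_def permutations_of_set_def)
  ultimately have len: "length s = length t"
    using distinct_card by metis
  have "lam n s = lam n t" "mu s = mu t"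
    using eq by (simp_all add: nu_def)
  with sets len p show ?thesis
    using lam_eq_imp_ltr_min_eq[of n s t p] mu_eq_imp_rtl_max_eq[of s t n p] by auto
qed

theorem mainTheorem1:
  fixes n :: nat
  assumes "n \<ge> 1"
  shows "inj_on (nu n) (Av1234 n)"
proof (rule inj_onI)
  fix s t assume s: "s \<in> Av1234 n" and t: "t \<in> Av1234 n" and eq: "nu n s = nu n t"
  then have "distinct s" "distinct t" "set s = set t" "avoids1234 s" "avoids1234 t"
    by (simp_all add: Av1234_def permutations_of_set_def)
  then show "s = t"
    using nu_eq_imp_agree_on_extrema[OF s t eq] nu_eq_imp_agree_on_extrema[OF t s eq[symmetric]]
    by (rule avoids1234_eq_if_agree_on_extrema)
qed

end
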